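(* Let $S$ be an idempotent semiring. The following are equivalent: (1) $\mathcal{R}^{\bullet}$ is the least distributive lattice congruence on $S$; (2) $\mathcal{D}^{+}\subseteq\mathcal{R}^{\bullet}$ and $S$ satisfies $x+yx+x\approx x$; (3) $S$ satisfies $x+xyx+x\approx x$ and $\mathcal{L}^{\bullet}\subseteq\mathcal{D}^{+}\subseteq\mathcal{R}^{\bullet}$; (4) $\leq^{r}_{\cdot}\ \subseteq\ \leq_{+}$ on $S$; (5) $S$ satisfies the identity $x\approx yx+x+yx$; (6) $S$ satisfies the identity $x\approx (y+x+y)x$.
   Context: An idempotent semiring is an algebra $(S,+,\cdot)$ with two binary operations such that $(S,+)$ and $(S,\cdot)$ are bands (associative, with $x+x=x$ and $xx=x$), and both distributive laws $x(y+z)=xy+xz$ and $(x+y)z=xz+yz$ hold; addition is not assumed commutative. A distributive lattice congruence on $S$ is a congruence $\rho$ such that $S/\rho$ satisfies $x+y\approx y+x$, $xy\approx yx$ and $x+xy\approx x$. Green's relations: $a\,\mathcal{L}^{\bullet}\,b$ iff $ab=a$ and $ba=b$; $a\,\mathcal{R}^{\bullet}\,b$ iff $ab=b$ and $ba=a$; $a\,\mathcal{D}^{+}\,b$ iff $a+b+a=a$ and $b+a+b=b$. Orders: $a\leq^{r}_{\cdot} b$ iff $a=ab$; $a\leq_{+} b$ iff $b=a+b$ and $b=b+a$. *)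

theory Defs
  imports Main
begin

text \<open>An idempotent semiring on the carrier type 'a, with addition pl and
multiplication mu (addition not assumed commutative).\<close>
definition idem_semiring :: "('a \<Rightarrow> 'a \<Rightarrow> 'a) \<Rightarrow> ('a \<Rightarrow> 'a \<Rightarrow> 'a) \<Rightarrow> bool" where
  "idem_semiring pl mu \<longleftrightarrow>
     (\<forall>x y z. pl (pl x y) z = pl x (pl y z)) \<and> (\<forall>x. pl x x = x) \<and>
     (\<forall>x y z. mu (mu x y) z = mu x (mu y z)) \<and> (\<forall>x. mu x x = x) \<and>
     (\<forall>x y z. mu x (pl y z) = pl (mu x y) (mu x z)) \<and>
     (\<forall>x y z. mu (pl x y) z = pl (mu x z) (mu y z))"

definition congruence :: "('a \<Rightarrow> 'a \<Rightarrow> 'a) \<Rightarrow> ('a \<Rightarrow> 'a \<Rightarrow> 'a) \<Rightarrow> ('a \<Rightarrow> 'a \<Rightarrow> bool) \<Rightarrow> bool" where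
  "congruence pl mu \<rho> \<longleftrightarrow> equivp \<rho> \<and>
     (\<forall>a b c d. \<rho> a b \<and> \<rho> c d \<longrightarrow> \<rho> (pl a c) (pl b d) \<and> \<rho> (mu a c) (mu b d))"

text \<open>S/rho satisfies x+y = y+x, xy = yx, x+xy = x (unfolded on representatives).\<close>
definition dl_congruence :: "('a \<Rightarrow> 'a \<Rightarrow> 'a) \<Rightarrow> ('a \<Rightarrow> 'a \<Rightarrow> 'a) \<Rightarrow> ('a \<Rightarrow> 'a \<Rightarrow> bool) \<Rightarrow> bool" where
  "dl_congruence pl mu \<rho> \<longleftrightarrow> congruence pl mu \<rho> \<and>
     (\<forall>x y. \<rho> (pl x y) (pl y x) \<and> \<rho> (mu x y) (mu y x) \<and> \<rho> (pl x (mu x y)) x)"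

definition least_dl_congruence :: "('a \<Rightarrow> 'a \<Rightarrow> 'a) \<Rightarrow> ('a \<Rightarrow> 'a \<Rightarrow> 'a) \<Rightarrow> ('a \<Rightarrow> 'a \<Rightarrow> bool) \<Rightarrow> bool" where
  "least_dl_congruence pl mu \<rho> \<longleftrightarrow> dl_congruence pl mu \<rho> \<and>
     (\<forall>\<sigma>. dl_congruence pl mu \<sigma> \<longrightarrow> (\<forall>a b. \<rho> a b \<longrightarrow> \<sigma> a b))"

definition Lmul :: "('a \<Rightarrow> 'a \<Rightarrow> 'a) \<Rightarrow> 'a \<Rightarrow> 'a \<Rightarrow> bool" where
  "Lmul mu a b \<longleftrightarrow> mu a b = a \<and> mu b a = b"

definition Rmul :: "('a \<Rightarrow> 'a \<Rightarrow> 'a) \<Rightarrow> 'a \<Rightarrow> 'a \<Rightarrow> bool" where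
  "Rmul mu a b \<longleftrightarrow> mu a b = b \<and> mu b a = a"

definition Dadd :: "('a \<Rightarrow> 'a \<Rightarrow> 'a) \<Rightarrow> 'a \<Rightarrow> 'a \<Rightarrow> bool" where
  "Dadd pl a b \<longleftrightarrow> pl (pl a b) a = a \<and> pl (pl b a) b = b"

definition le_mul_r :: "('a \<Rightarrow> 'a \<Rightarrow> 'a) \<Rightarrow> 'a \<Rightarrow> 'a \<Rightarrow> bool" where
  "le_mul_r mu a b \<longleftrightarrow> a = mu a b"

definition le_add :: "('a \<Rightarrow> 'a \<Rightarrow> 'a) \<Rightarrow> 'a \<Rightarrow> 'a \<Rightarrow> bool" where
  "le_add pl a b \<longleftrightarrow> b = pl a b \<and> b = pl b a"

end

theory Submission
  imports Defs
begin

text \<open>All six conditions are equivalent to the statement that every left multiple \<open>yx\<close>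
lies below \<open>x\<close> in the additive order, i.e. \<open>x + yx = x = yx + x\<close>; identity (6) is just
(5) rewritten by right distributivity. This absorption law makes the multiplicative band left
regular (\<open>xyx = yx\<close>), which is what makes \<open>R\<^sup>\<bullet>\<close> compatible with both operations and
turns the quotient into a distributive lattice. Conversely \<open>R\<^sup>\<bullet>\<close> lies in every
distributive lattice congruence \<open>\<rho>\<close>, since \<open>a R\<^sup>\<bullet> b\<close> means \<open>b = ab \<rho> ba = a\<close>.\<close>

locale idempotent_semiring =
  fixes pl mu :: "'a \<Rightarrow> 'a \<Rightarrow> 'a"
  assumes pl_assoc: "pl (pl x y) z = pl x (pl y z)"
    and pl_idem: "pl x x = x"
    and mu_assoc: "mu (mu x y) z = mu x (mu y z)"
    and mu_idem: "mu x x = x"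
    and distrib_left: "mu x (pl y z) = pl (mu x y) (mu x z)"
    and distrib_right: "mu (pl x y) z = pl (mu x z) (mu y z)"

lemma idem_semiring_imp_idempotent_semiring:
  "idem_semiring pl mu \<Longrightarrow> idempotent_semiring pl mu"
  unfolding idem_semiring_def idempotent_semiring_def by blast

context idempotent_semiring
begin

lemma pl_left_absorb: "pl x (pl x y) = pl x y"
  by (simp flip: pl_assoc add: pl_idem)

lemma mu_left_absorb: "mu x (mu x y) = mu x y"
  by (simp flip: mu_assoc add: mu_idem)

lemma pl_sandwich_absorb:
  assumes "pl (pl u x) u = x"
  shows "pl x u = x" and "pl u x = x"
proof -
  have "pl x u = pl (pl (pl u x) u) u" using assms by simp
  also have "\<dots> = pl (pl u x) u" by (simp add: pl_assoc pl_idem)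
  also have "\<dots> = x" by (rule assms)
  finally show "pl x u = x" .
  have "pl u x = pl u (pl (pl u x) u)" using assms by simp
  also have "\<dots> = pl (pl u x) u" by (simp add: pl_left_absorb flip: pl_assoc)
  also have "\<dots> = x" by (rule assms)
  finally show "pl u x = x" .
qed

lemma mu_sandwich: "mu (pl (pl y x) y) x = pl (pl (mu y x) x) (mu y x)"
  by (simp add: distrib_right mu_idem)

lemma Rmul_equivp: "equivp (Rmul mu)"
proof (rule equivpI)
  show "reflp (Rmul mu)" and "symp (Rmul mu)"
    by (auto intro!: reflpI sympI simp: Rmul_def mu_idem)
  show "transp (Rmul mu)"
    by (rule transpI) (unfold Rmul_def, metis mu_assoc)
qed

definition left_multiples_below :: bool where
  "left_multiples_below \<longleftrightarrow> (\<forall>x y. le_add pl (mu y x) x)"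

lemma sandwich_absorb_if_Dadd_imp_Rmul:
  assumes DR: "\<forall>a b. Dadd pl a b \<longrightarrow> Rmul mu a b" and x: "pl (pl x z) x = x"
  shows "pl x (mu z x) = x" and "pl (mu z x) x = x"
proof -
  have "Dadd pl x (pl x z)" and "Dadd pl x (pl z x)"
    using x unfolding Dadd_def by (simp_all add: pl_assoc pl_idem pl_left_absorb)
  then have "mu (pl x z) x = x" and "mu (pl z x) x = x"
    using DR unfolding Rmul_def by blast+
  then show "pl x (mu z x) = x" and "pl (mu z x) x = x"
    by (simp_all add: distrib_right mu_idem)
qed

context
  assumes below: left_multiples_below
begin

lemma pl_left_mult_absorb: "pl x (mu y x) = x"
  and left_mult_pl_absorb: "pl (mu y x) x = x"
  using below unfolding left_multiples_below_def le_add_def by metis+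

lemma mu_left_regular: "mu x (mu y x) = mu y x"
proof -
  have "mu x (mu y x) = pl (mu x (mu y x)) (mu y (mu x (mu y x)))"
    by (rule pl_left_mult_absorb[symmetric])
  also have "mu y (mu x (mu y x)) = mu y x"
    by (metis mu_assoc mu_idem)
  also have "pl (mu x (mu y x)) (mu y x) = mu y x"
    by (rule left_mult_pl_absorb)
  finally show ?thesis .
qed

lemma Dadd_imp_Rmul: "Dadd pl a b \<Longrightarrow> Rmul mu a b"
proof -
  have "mu a b = b" if "pl (pl a b) a = a" for a b
  proof -
    have "mu a b = mu (pl (pl a b) a) b" using that by simp
    also have "\<dots> = b"
      by (simp add: distrib_right mu_idem pl_left_mult_absorb left_mult_pl_absorb)
    finally show ?thesis .
  qed
  then show "Dadd pl a b \<Longrightarrow> Rmul mu a b"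
    unfolding Dadd_def Rmul_def by blast
qed

lemma Lmul_imp_eq:
  assumes "Lmul mu a b" shows "a = b"
proof -
  have "mu a b = a" and "mu b a = b" using assms unfolding Lmul_def by auto
  then have "pl a b = b" and "pl a b = a"
    by (metis left_mult_pl_absorb, metis pl_left_mult_absorb)
  then show ?thesis by simp
qed

lemma congruence_Rmul: "congruence pl mu (Rmul mu)"
proof -
  have mu_compat: "mu (mu a c) (mu b d) = mu b d" if "mu a b = b" "mu c d = d" for a b c d
  proof -
    have "mu (mu a c) (mu b d) = mu a (mu (mu c (mu b c)) d)"
      using that(2) by (simp add: mu_assoc)
    also have "\<dots> = mu (mu a b) (mu c d)"
      by (simp add: mu_left_regular mu_assoc)
    finally show ?thesis using that by simp
  qed
  have pl_compat_right: "mu (pl a c) (pl b c) = pl b c" if "mu a b = b" for a b c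
  proof -
    have "mu (pl a c) (pl b c) = pl (pl (mu a b) (mu c b)) (pl (mu a c) c)"
      by (simp add: distrib_left distrib_right mu_idem)
    then show ?thesis
      by (simp only: that pl_left_mult_absorb left_mult_pl_absorb)
  qed
  have pl_compat_left: "mu (pl c a) (pl c b) = pl c b" if "mu a b = b" for a b c
  proof -
    have "mu (pl c a) (pl c b) = pl (pl c (mu a c)) (pl (mu c b) (mu a b))"
      by (simp add: distrib_left distrib_right mu_idem)
    then show ?thesis
      by (simp only: that pl_left_mult_absorb left_mult_pl_absorb)
  qed
  have "Rmul mu (mu a c) (mu b d) \<and> Rmul mu (pl a c) (pl b d)"
    if "Rmul mu a b" "Rmul mu c d" for a b c d
  proof
    show "Rmul mu (mu a c) (mu b d)"
      using that unfolding Rmul_def by (simp add: mu_compat)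
    have "Rmul mu (pl a c) (pl b c)" and "Rmul mu (pl b c) (pl b d)"
      using that unfolding Rmul_def by (simp_all add: pl_compat_right pl_compat_left)
    then show "Rmul mu (pl a c) (pl b d)"
      using Rmul_equivp equivp_transp by metis
  qed
  then show ?thesis
    unfolding congruence_def using Rmul_equivp by blast
qed

lemma dl_congruence_Rmul: "dl_congruence pl mu (Rmul mu)"
proof -
  have "mu (pl x y) (pl y x) = pl y x" for x y
  proof -
    have "mu (pl x y) (pl y x) = pl (pl (mu x y) y) (pl x (mu y x))"
      by (simp add: distrib_left distrib_right mu_idem)
    also have "\<dots> = pl y x"
      by (simp only: pl_left_mult_absorb left_mult_pl_absorb)
    finally show ?thesis .
  qed
  then have "Rmul mu (pl x y) (pl y x)" for x y
    unfolding Rmul_def by blast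
  moreover have "Rmul mu (mu x y) (mu y x)" for x y
    unfolding Rmul_def by (metis mu_assoc mu_idem mu_left_regular)
  moreover have "Rmul mu (pl x (mu x y)) x" for x y
    unfolding Rmul_def
    by (simp add: distrib_left distrib_right mu_idem mu_left_absorb mu_assoc mu_left_regular
        pl_left_mult_absorb)
  ultimately show ?thesis
    unfolding dl_congruence_def using congruence_Rmul by blast
qed

end

lemma left_multiples_below_iff_identity:
  "left_multiples_below \<longleftrightarrow> (\<forall>x y. x = pl (pl (mu y x) x) (mu y x))"
proof
  assume "left_multiples_below"
  then show "\<forall>x y. x = pl (pl (mu y x) x) (mu y x)"
    using left_mult_pl_absorb pl_left_mult_absorb by simp
next
  assume "\<forall>x y. x = pl (pl (mu y x) x) (mu y x)"
  then have "pl x (mu y x) = x" and "pl (mu y x) x = x" for x y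
    using pl_sandwich_absorb by metis+
  then show "left_multiples_below"
    unfolding left_multiples_below_def le_add_def by simp
qed

lemma left_multiples_below_iff_le_mul_r_le_add:
  "left_multiples_below \<longleftrightarrow> (\<forall>a b. le_mul_r mu a b \<longrightarrow> le_add pl a b)"
proof
  assume "left_multiples_below"
  then have "le_add pl (mu a b) b" for a b
    unfolding left_multiples_below_def by blast
  then show "\<forall>a b. le_mul_r mu a b \<longrightarrow> le_add pl a b"
    unfolding le_mul_r_def by metis
next
  assume "\<forall>a b. le_mul_r mu a b \<longrightarrow> le_add pl a b"
  moreover have "le_mul_r mu (mu y x) x" for x y
    unfolding le_mul_r_def by (simp add: mu_assoc mu_idem)
  ultimately show "left_multiples_below"
    unfolding left_multiples_below_def by blast
qed

lemma left_multiples_below_iff_Dadd_Rmul_absorb: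
  "left_multiples_below \<longleftrightarrow>
     (\<forall>a b. Dadd pl a b \<longrightarrow> Rmul mu a b) \<and> (\<forall>x y. pl (pl x (mu y x)) x = x)"
  (is "_ \<longleftrightarrow> ?rhs")
proof
  assume "left_multiples_below"
  then show ?rhs
    using Dadd_imp_Rmul pl_left_mult_absorb by (simp add: pl_idem)
next
  assume ?rhs
  then have DR: "\<forall>a b. Dadd pl a b \<longrightarrow> Rmul mu a b" and T: "pl (pl x (mu y x)) x = x" for x y
    by blast+
  have "pl x (mu y x) = x \<and> pl (mu y x) x = x" for x y
  proof -
    have "mu (mu y x) x = mu y x" by (simp add: mu_assoc mu_idem)
    then show ?thesis
      using sandwich_absorb_if_Dadd_imp_Rmul[OF DR T[of x y]] by simp
  qed
  then show "left_multiples_below"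
    unfolding left_multiples_below_def le_add_def by simp
qed

lemma left_multiples_below_iff_Lmul_Dadd_Rmul:
  "left_multiples_below \<longleftrightarrow>
     (\<forall>x y. pl (pl x (mu (mu x y) x)) x = x) \<and>
     (\<forall>a b. Lmul mu a b \<longrightarrow> Dadd pl a b) \<and> (\<forall>a b. Dadd pl a b \<longrightarrow> Rmul mu a b)"
  (is "_ \<longleftrightarrow> ?rhs")
proof
  assume "left_multiples_below"
  then show ?rhs
    using Dadd_imp_Rmul pl_left_mult_absorb by (auto simp: Dadd_def pl_idem dest!: Lmul_imp_eq)
next
  assume ?rhs
  then have T: "\<forall>x y. pl (pl x (mu (mu x y) x)) x = x"
    and LD: "\<forall>a b. Lmul mu a b \<longrightarrow> Dadd pl a b"
    and DR: "\<forall>a b. Dadd pl a b \<longrightarrow> Rmul mu a b"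
    by blast+
  have "le_add pl a b" if "a = mu a b" for a b
  proof -
    from that have ab: "mu a b = a" ..
    have "mu a (mu b a) = a"
      using ab by (simp flip: mu_assoc add: mu_idem)
    moreover have "mu (mu b a) a = mu b a"
      by (simp add: mu_assoc mu_idem)
    ultimately have "Rmul mu a (mu b a)"
      using LD DR unfolding Lmul_def by blast
    then have ba: "mu b a = a"
      using \<open>mu a (mu b a) = a\<close> unfolding Rmul_def by simp
    have "pl (pl b (mu (mu b a) b)) b = b"
      using T by blast
    then have "pl (pl b a) b = b"
      using ab ba by (simp add: mu_assoc)
    then have "pl b (mu a b) = b" and "pl (mu a b) b = b"
      by (rule sandwich_absorb_if_Dadd_imp_Rmul[OF DR])+
    then show ?thesis
      using ab unfolding le_add_def by simp
  qed
  then show "left_multiples_below"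
    unfolding left_multiples_below_iff_le_mul_r_le_add le_mul_r_def by blast
qed

lemma left_multiples_below_iff_dl_congruence_Rmul:
  "left_multiples_below \<longleftrightarrow> dl_congruence pl mu (Rmul mu)"
proof
  assume "left_multiples_below"
  then show "dl_congruence pl mu (Rmul mu)" by (rule dl_congruence_Rmul)
next
  assume "dl_congruence pl mu (Rmul mu)"
  then have dl: "Rmul mu (pl x y) (pl y x)" "Rmul mu (mu x y) (mu y x)" "Rmul mu (pl x (mu x y)) x"
    for x y
    unfolding dl_congruence_def by blast+
  have "x = pl (pl (mu y x) x) (mu y x)" for x y
  proof -
    have regular: "mu x (mu y x) = mu y x"
      using dl(2)[of x y] unfolding Rmul_def by (simp add: mu_assoc mu_left_absorb)
    have absorb: "pl x (mu y x) = x"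
      using dl(3)[of x y] regular unfolding Rmul_def by (simp add: distrib_right mu_assoc mu_idem)
    have "pl (mu y x) (pl x (mu y x)) = mu (pl (mu y x) x) (pl x (mu y x))"
      by (simp add: distrib_left distrib_right mu_assoc mu_idem regular)
        (simp add: pl_assoc pl_idem)
    also have "\<dots> = pl x (mu y x)"
      using dl(1)[of x "mu y x"] unfolding Rmul_def by blast
    finally show ?thesis
      using absorb by (simp only: pl_assoc)
  qed
  then show "left_multiples_below"
    unfolding left_multiples_below_iff_identity by blast
qed

end

lemma dl_congruence_contains_Rmul:
  assumes "dl_congruence pl mu \<sigma>" and "Rmul mu a b"
  shows "\<sigma> a b"
proof -
  have "equivp \<sigma>" and "\<sigma> (mu a b) (mu b a)"
    using assms(1) unfolding dl_congruence_def congruence_def by blast+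
  then have "\<sigma> b a"
    using assms(2) unfolding Rmul_def by simp
  with \<open>equivp \<sigma>\<close> show ?thesis
    by (rule equivp_symp)
qed

lemma least_dl_congruence_Rmul_iff:
  "least_dl_congruence pl mu (Rmul mu) \<longleftrightarrow> dl_congruence pl mu (Rmul mu)"
  unfolding least_dl_congruence_def by (simp add: dl_congruence_contains_Rmul)

theorem theorem3p4:
  fixes pl mu :: "'a \<Rightarrow> 'a \<Rightarrow> 'a"
  assumes "idem_semiring pl mu"
  defines "P1 \<equiv> least_dl_congruence pl mu (Rmul mu)"
      and "P2 \<equiv> (\<forall>a b. Dadd pl a b \<longrightarrow> Rmul mu a b) \<and>
                 (\<forall>x y. pl (pl x (mu y x)) x = x)"
      and "P3 \<equiv> (\<forall>x y. pl (pl x (mu (mu x y) x)) x = x) \<and>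
                 (\<forall>a b. Lmul mu a b \<longrightarrow> Dadd pl a b) \<and>
                 (\<forall>a b. Dadd pl a b \<longrightarrow> Rmul mu a b)"
      and "P4 \<equiv> (\<forall>a b. le_mul_r mu a b \<longrightarrow> le_add pl a b)"
      and "P5 \<equiv> (\<forall>x y. x = pl (pl (mu y x) x) (mu y x))"
      and "P6 \<equiv> (\<forall>x y. x = mu (pl (pl y x) y) x)"
  shows "(P1 \<longleftrightarrow> P2) \<and> (P2 \<longleftrightarrow> P3) \<and> (P3 \<longleftrightarrow> P4) \<and> (P4 \<longleftrightarrow> P5) \<and> (P5 \<longleftrightarrow> P6)"
proof -
  interpret idempotent_semiring pl mu
    using assms(1) by (rule idem_semiring_imp_idempotent_semiring)
  have "P1 \<longleftrightarrow> left_multiples_below"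
    unfolding P1_def least_dl_congruence_Rmul_iff left_multiples_below_iff_dl_congruence_Rmul ..
  moreover have "P2 \<longleftrightarrow> left_multiples_below"
    unfolding P2_def left_multiples_below_iff_Dadd_Rmul_absorb ..
  moreover have "P3 \<longleftrightarrow> left_multiples_below"
    unfolding P3_def left_multiples_below_iff_Lmul_Dadd_Rmul ..
  moreover have "P4 \<longleftrightarrow> left_multiples_below"
    unfolding P4_def left_multiples_below_iff_le_mul_r_le_add ..
  moreover have "P5 \<longleftrightarrow> left_multiples_below"
    unfolding P5_def left_multiples_below_iff_identity ..
  moreover have "P6 \<longleftrightarrow> P5"
    unfolding P5_def P6_def mu_sandwich ..
  ultimately show ?thesis by simp
qed

end
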